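(* Let $\mathcal F$ be a filtration array and $E=(E_{m,n})_{m,n\in\mathbb N}$ a nonnegative process adapted to $\mathcal F$. If $E$ is an asymptotic supermartingale (in $L_1$, for $\mathcal F$, uniformly in $\mathcal P$), then $E$ has the asymptotic supermartingale property (in $L_1$, for $\mathcal F$, uniformly in $\mathcal P$).
   Context: $(\Omega,\mathcal A)$ is a measurable space and $\mathcal P$ a set of probability measures on it; $\mathbb N=\{0,1,\dots\}$. A filtration array is a family $(\mathcal F_{m,n})_{m,n\in\mathbb N}$ of sub-$\sigma$-algebras of $\mathcal A$ with $\mathcal F_{m,n}\subset\mathcal F_{m+1,n}\cap\mathcal F_{m,n+1}$; $\mathcal F_{\infty,n}:=\sigma(\bigcup_m\mathcal F_{m,n})$. Adapted means $E_{m,n}$ is $\mathcal F_{m,n}$-measurable. A supermartingale for $\mathcal P$ w.r.t. a filtration $\mathcal G$ is a $\mathcal G$-adapted process $(S_n)$ with each $S_n$ $P$-integrable and $\mathbb E_P[S_{n+1}\mid\mathcal G_n]\le S_n$ $P$-a.s. for all $P\in\mathcal P$, $n\in\mathbb N$. $E$ converges to $S$ in $L_1$ uniformly in $\mathcal P$ if all $E_{m,n},S_n$ are $P$-integrable for all $P\in\mathcal P$ and $\lim_m\sup_{P\in\mathcal P}\mathbb E_P[|E_{m,n}-S_n|]=0$ for every $n$. $E$ is an asymptotic supermartingale if there is a nonnegative supermartingale $S$ for $\mathcal P$ w.r.t. $\mathcal F_{\infty,\bullet}$ such that $E$ converges to $S$ in $L_1$ uniformly in $\mathcal P$. For $P\in\mathcal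 P$ and $m,n\in\mathbb N$ let $\delta_{m,n}=\mathbb E_P[E_{m,n+1}\mid\mathcal F_{m,n}]-E_{m,n}$ if $E_{m,n+1}$ is $P$-integrable and $\delta_{m,n}=\infty$ otherwise (dependence on $P$ suppressed). $E$ has the asymptotic supermartingale property (ASP) if for every $n\in\mathbb N$, $\lim_{m\to\infty}\sup_{P\in\mathcal P}\mathbb E_P[\delta_{m,n}^+]=0$, where $x^+=\max\{x,0\}$. *)

theory Defs
  imports "HOL-Probability.Probability"
begin

text \<open>The measurable space (Omega, A) is represented by a measure M (only its space and
  sigma-algebra are used); the family of probability measures is a set of measures on the
  same sigma-algebra.  Sub-sigma-algebras are represented as measures F with subalgebra M F.\<close>

definition prob_family :: "'a measure \<Rightarrow> 'a measure set \<Rightarrow> bool" where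
  "prob_family M Ps \<longleftrightarrow> (\<forall>P\<in>Ps. prob_space P \<and> sets P = sets M)"

definition filtration_array :: "'a measure \<Rightarrow> (nat \<Rightarrow> nat \<Rightarrow> 'a measure) \<Rightarrow> bool" where
  "filtration_array M F \<longleftrightarrow>
     (\<forall>m n. subalgebra M (F m n)) \<and>
     (\<forall>m n. sets (F m n) \<subseteq> sets (F (Suc m) n) \<inter> sets (F m (Suc n)))"

definition F_infty :: "'a measure \<Rightarrow> (nat \<Rightarrow> nat \<Rightarrow> 'a measure) \<Rightarrow> nat \<Rightarrow> 'a measure" where
  "F_infty M F n = sigma (space M) (\<Union>m. sets (F m n))"

definition adapted_array :: "(nat \<Rightarrow> nat \<Rightarrow> 'a measure) \<Rightarrow> (nat \<Rightarrow> nat \<Rightarrow> 'a \<Rightarrow> real) \<Rightarrow> bool" where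
  "adapted_array F E \<longleftrightarrow> (\<forall>m n. E m n \<in> borel_measurable (F m n))"

definition supermartingale ::
    "'a measure set \<Rightarrow> (nat \<Rightarrow> 'a measure) \<Rightarrow> (nat \<Rightarrow> 'a \<Rightarrow> real) \<Rightarrow> bool" where
  "supermartingale Ps G S \<longleftrightarrow>
     (\<forall>n. S n \<in> borel_measurable (G n)) \<and>
     (\<forall>P\<in>Ps. \<forall>n. integrable P (S n) \<and>
        (AE x in P. real_cond_exp P (G n) (S (Suc n)) x \<le> S n x))"

definition L1_unif_conv ::
    "'a measure set \<Rightarrow> (nat \<Rightarrow> nat \<Rightarrow> 'a \<Rightarrow> real) \<Rightarrow> (nat \<Rightarrow> 'a \<Rightarrow> real) \<Rightarrow> bool" where
  "L1_unif_conv Ps E S \<longleftrightarrow>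
     (\<forall>P\<in>Ps. \<forall>m n. integrable P (E m n) \<and> integrable P (S n)) \<and>
     (\<forall>n. (\<lambda>m. SUP P\<in>Ps. \<integral>\<^sup>+ x. ennreal \<bar>E m n x - S n x\<bar> \<partial>P) \<longlonglongrightarrow> 0)"

definition asymptotic_supermartingale ::
    "'a measure \<Rightarrow> 'a measure set \<Rightarrow> (nat \<Rightarrow> nat \<Rightarrow> 'a measure) \<Rightarrow> (nat \<Rightarrow> nat \<Rightarrow> 'a \<Rightarrow> real) \<Rightarrow> bool" where
  "asymptotic_supermartingale M Ps F E \<longleftrightarrow>
     (\<exists>S. (\<forall>n. \<forall>x\<in>space M. S n x \<ge> 0) \<and> supermartingale Ps (F_infty M F) S \<and>
          L1_unif_conv Ps E S)"

text \<open>E_P[delta_{m,n}^+] as an extended nonnegative real; it is infinity when E_{m,n+1}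
  is not P-integrable (then delta = infinity).\<close>
definition exp_delta_pos ::
    "'a measure \<Rightarrow> (nat \<Rightarrow> nat \<Rightarrow> 'a measure) \<Rightarrow> (nat \<Rightarrow> nat \<Rightarrow> 'a \<Rightarrow> real) \<Rightarrow> nat \<Rightarrow> nat \<Rightarrow> ennreal" where
  "exp_delta_pos P F E m n =
     (if integrable P (E m (Suc n))
      then \<integral>\<^sup>+ x. ennreal (max 0 (real_cond_exp P (F m n) (E m (Suc n)) x - E m n x)) \<partial>P
      else \<infinity>)"

definition ASP ::
    "'a measure set \<Rightarrow> (nat \<Rightarrow> nat \<Rightarrow> 'a measure) \<Rightarrow> (nat \<Rightarrow> nat \<Rightarrow> 'a \<Rightarrow> real) \<Rightarrow> bool" where
  "ASP Ps F E \<longleftrightarrow> (\<forall>n. (\<lambda>m. SUP P\<in>Ps. exp_delta_pos P F E m n) \<longlonglongrightarrow> 0)"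

end

theory Submission
  imports Defs
begin

text \<open>Let S be the limiting supermartingale. As E_{m,n} is F_{m,n}-measurable and
  F_{m,n} is contained in F_{oo,n}, the tower property splits delta_{m,n} into
  E[E_{m,n+1} - S_{n+1} | F_{m,n}] + E[E[S_{n+1} | F_{oo,n}] - S_n | F_{m,n}]
  + E[S_n - E_{m,n} | F_{m,n}],
  whose middle term is nonpositive. Conditional expectation is an L1-contraction, so
  E_P[delta_{m,n}^+] is at most |E_{m,n+1} - S_{n+1}|_1 + |E_{m,n} - S_n|_1, and both terms
  vanish as m tends to infinity, uniformly in P.\<close>

context sigma_finite_subalgebra
begin

lemma nn_integral_abs_real_cond_exp_le:
  assumes [measurable]: "f \<in> borel_measurable M"
  shows "(\<integral>\<^sup>+ x. ennreal \<bar>real_cond_exp M F f x\<bar> \<partial>M) \<le> (\<integral>\<^sup>+ x. ennreal \<bar>f x\<bar> \<partial>M)"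
proof -
  have "(\<integral>\<^sup>+ x. ennreal \<bar>real_cond_exp M F f x\<bar> \<partial>M)
      \<le> (\<integral>\<^sup>+ x. 1 * nn_cond_exp M F (\<lambda>x. ennreal \<bar>f x\<bar>) x \<partial>M)"
    by (rule nn_integral_mono_AE) (use real_cond_exp_abs in simp)
  also have "\<dots> = (\<integral>\<^sup>+ x. 1 * ennreal \<bar>f x\<bar> \<partial>M)"
    by (rule nn_cond_exp_intg) auto
  finally show ?thesis
    by simp
qed

lemma AE_real_cond_exp_excess_le:
  assumes G: "subalgebra M G" "subalgebra G F"
    and [measurable]: "integrable M e0" "integrable M e1" "integrable M s0" "integrable M s1"
    and e0_F: "e0 \<in> borel_measurable F"
    and supermart: "AE x in M. real_cond_exp M G s1 x \<le> s0 x"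
  shows "AE x in M. max 0 (real_cond_exp M F e1 x - e0 x)
    \<le> \<bar>real_cond_exp M F (\<lambda>x. e1 x - s1 x) x\<bar> + \<bar>real_cond_exp M F (\<lambda>x. s0 x - e0 x) x\<bar>"
proof -
  interpret G: sigma_finite_subalgebra M G
    using nested_subalg_is_sigma_finite[OF G] .
  have "AE x in M. real_cond_exp M F (real_cond_exp M G s1) x = real_cond_exp M F s1 x"
    using real_cond_exp_nested_subalg[OF G \<open>integrable M s1\<close>] .
  moreover have "AE x in M. real_cond_exp M F (real_cond_exp M G s1) x \<le> real_cond_exp M F s0 x"
    using real_cond_exp_mono[OF supermart G.real_cond_exp_int(1)]
      \<open>integrable M s0\<close> \<open>integrable M s1\<close> by blast
  moreover have "AE x in M. real_cond_exp M F e0 x = e0 x"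
    using real_cond_exp_F_meas[OF \<open>integrable M e0\<close> e0_F] .
  moreover note real_cond_exp_diff[OF \<open>integrable M e1\<close> \<open>integrable M s1\<close>]
    real_cond_exp_diff[OF \<open>integrable M s0\<close> \<open>integrable M e0\<close>]
  ultimately show ?thesis
    by eventually_elim auto
qed

lemma nn_integral_real_cond_exp_excess_le:
  assumes "subalgebra M G" "subalgebra G F"
    and [measurable]: "integrable M e0" "integrable M e1" "integrable M s0" "integrable M s1"
    and "e0 \<in> borel_measurable F"
    and "AE x in M. real_cond_exp M G s1 x \<le> s0 x"
  shows "(\<integral>\<^sup>+ x. ennreal (max 0 (real_cond_exp M F e1 x - e0 x)) \<partial>M)
    \<le> (\<integral>\<^sup>+ x. ennreal \<bar>e1 x - s1 x\<bar> \<partial>M) + (\<integral>\<^sup>+ x. ennreal \<bar>e0 x - s0 x\<bar> \<partial>M)"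
proof -
  have "(\<integral>\<^sup>+ x. ennreal (max 0 (real_cond_exp M F e1 x - e0 x)) \<partial>M)
      \<le> (\<integral>\<^sup>+ x. ennreal \<bar>real_cond_exp M F (\<lambda>x. e1 x - s1 x) x\<bar>
             + ennreal \<bar>real_cond_exp M F (\<lambda>x. s0 x - e0 x) x\<bar> \<partial>M)"
    using AE_real_cond_exp_excess_le[OF assms]
    by (intro nn_integral_mono_AE) (auto elim!: AE_mp simp flip: ennreal_plus)
  also have "\<dots> = (\<integral>\<^sup>+ x. ennreal \<bar>real_cond_exp M F (\<lambda>x. e1 x - s1 x) x\<bar> \<partial>M)
      + (\<integral>\<^sup>+ x. ennreal \<bar>real_cond_exp M F (\<lambda>x. s0 x - e0 x) x\<bar> \<partial>M)"
    by (rule nn_integral_add) auto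
  also have "\<dots> \<le> (\<integral>\<^sup>+ x. ennreal \<bar>e1 x - s1 x\<bar> \<partial>M) + (\<integral>\<^sup>+ x. ennreal \<bar>s0 x - e0 x\<bar> \<partial>M)"
    by (intro add_mono nn_integral_abs_real_cond_exp_le) auto
  finally show ?thesis
    by (simp add: abs_minus_commute)
qed

end

lemma subalgebra_cong_sets:
  assumes "subalgebra M N" "sets P = sets M"
  shows "subalgebra P N"
  using assms sets_eq_imp_space_eq[OF assms(2)] by (simp add: subalgebra_def)

lemma
  assumes "filtration_array M F"
  shows subalgebra_F_infty: "subalgebra M (F_infty M F n)"
    and sets_subset_F_infty: "sets (F m n) \<subseteq> sets (F_infty M F n)"
proof -
  have F_M: "(\<Union>m. sets (F m n)) \<subseteq> sets M"
    using assms by (auto simp: filtration_array_def subalgebra_def)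
  then have sets_F_infty: "sets (F_infty M F n) = sigma_sets (space M) (\<Union>m. sets (F m n))"
    using sets.sets_into_space by (auto simp: F_infty_def intro!: sets_measure_of)
  show "subalgebra M (F_infty M F n)"
    using F_M by (simp add: subalgebra_def sets_F_infty sets.sigma_sets_subset)
      (simp add: F_infty_def space_measure_of_conv)
  show "sets (F m n) \<subseteq> sets (F_infty M F n)"
    by (auto simp: sets_F_infty intro: sigma_sets.Basic)
qed

lemma exp_delta_pos_le_L1_dist:
  assumes Ps: "prob_family M Ps" and P: "P \<in> Ps"
    and F: "filtration_array M F" and E: "adapted_array F E"
    and S: "supermartingale Ps (F_infty M F) S"
    and int: "\<And>m n. integrable P (E m n)" "\<And>n. integrable P (S n)"
  shows "exp_delta_pos P F E m n
    \<le> (\<integral>\<^sup>+ x. ennreal \<bar>E m (Suc n) x - S (Suc n) x\<bar> \<partial>P) + (\<integral>\<^sup>+ x. ennreal \<bar>E m n x - S n x\<bar> \<partial>P)"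
proof -
  have "prob_space P" and sets_P: "sets P = sets M"
    using Ps P by (auto simp: prob_family_def)
  then interpret prob_space P
    by simp
  have "subalgebra P (F m n)"
    using F sets_P by (auto simp: filtration_array_def intro: subalgebra_cong_sets)
  then interpret finite_measure_subalgebra P "F m n"
    by unfold_locales
  have G: "subalgebra P (F_infty M F n)"
    using subalgebra_cong_sets[OF subalgebra_F_infty[OF F] sets_P] .
  have F_G: "subalgebra (F_infty M F n) (F m n)"
    using subalg G sets_subset_F_infty[OF F] by (simp add: subalgebra_def)
  have E_F: "E m n \<in> borel_measurable (F m n)"
    using E by (simp add: adapted_array_def)
  have supermart: "AE x in P. real_cond_exp P (F_infty M F n) (S (Suc n)) x \<le> S n x"
    using S P by (simp add: supermartingale_def)
  have "exp_delta_pos P F E m n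
      = (\<integral>\<^sup>+ x. ennreal (max 0 (real_cond_exp P (F m n) (E m (Suc n)) x - E m n x)) \<partial>P)"
    using int by (simp add: exp_delta_pos_def)
  also have "\<dots> \<le> (\<integral>\<^sup>+ x. ennreal \<bar>E m (Suc n) x - S (Suc n) x\<bar> \<partial>P)
      + (\<integral>\<^sup>+ x. ennreal \<bar>E m n x - S n x\<bar> \<partial>P)"
    by (rule nn_integral_real_cond_exp_excess_le
        [OF G F_G int(1) int(1) int(2) int(2) E_F supermart])
  finally show ?thesis .
qed

lemma tendsto_SUP_zero_if_le_add:
  fixes f g h :: "'i \<Rightarrow> 'b \<Rightarrow> ennreal"
  assumes le: "\<And>i m. i \<in> I \<Longrightarrow> f i m \<le> g i m + h i m"
    and g: "((\<lambda>m. SUP i\<in>I. g i m) \<longlongrightarrow> 0) L"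
    and h: "((\<lambda>m. SUP i\<in>I. h i m) \<longlongrightarrow> 0) L"
  shows "((\<lambda>m. SUP i\<in>I. f i m) \<longlongrightarrow> 0) L"
proof (rule tendsto_sandwich[OF _ _ tendsto_const])
  show "((\<lambda>m. (SUP i\<in>I. g i m) + (SUP i\<in>I. h i m)) \<longlongrightarrow> 0) L"
    using tendsto_add[OF g h] by simp
  show "\<forall>\<^sub>F m in L. (SUP i\<in>I. f i m) \<le> (SUP i\<in>I. g i m) + (SUP i\<in>I. h i m)"
    by (intro always_eventually allI SUP_least order_trans[OF le] add_mono SUP_upper)
  show "\<forall>\<^sub>F m in L. 0 \<le> (SUP i\<in>I. f i m)"
    by simp
qed

theorem mainTheorem6:
  fixes M :: "'a measure" and Ps :: "'a measure set"
    and F :: "nat \<Rightarrow> nat \<Rightarrow> 'a measure" and E :: "nat \<Rightarrow> nat \<Rightarrow> 'a \<Rightarrow> real"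
  assumes "prob_family M Ps"
    and "filtration_array M F"
    and "adapted_array F E"
    and "\<And>m n x. x \<in> space M \<Longrightarrow> E m n x \<ge> 0"
    and "asymptotic_supermartingale M Ps F E"
  shows "ASP Ps F E"
proof -
  obtain S where S: "supermartingale Ps (F_infty M F) S" and conv: "L1_unif_conv Ps E S"
    using assms(5) unfolding asymptotic_supermartingale_def by blast
  show ?thesis
    unfolding ASP_def
  proof
    fix n
    show "(\<lambda>m. SUP P\<in>Ps. exp_delta_pos P F E m n) \<longlonglongrightarrow> 0"
      using conv
      by (intro tendsto_SUP_zero_if_le_add[OF exp_delta_pos_le_L1_dist[OF assms(1) _ assms(2,3) S]])
        (auto simp: L1_unif_conv_def)
  qed
qed

end
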